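(* Let $N$ be an odd prime and let $M=(N-1)/2$. Then for every integer $r$ with $0<r\le M$, the inverse problem $\mathrm{IP}(N,r,1)$ is uniquely solvable; that is, for any two distinct vectors ${\tt x},{\tt y}\in\Omega(N,r)$ one has $\tilde{x}_1\neq\tilde{y}_1$.
   Context: For a vector ${\tt v}=(v_1,\dots,v_N)$ of odd length $N>1$, its discrete Fourier transform (DFT) coefficients are $\tilde{v}_m=\sum_{n=1}^N v_n e^{\mathrm{i}\xi m n}$ with $\xi=2\pi/N$, for integers $m$. A vector is binary if all its entries are $0$ or $1$. $\Omega(N,r)$ denotes the set of binary vectors of length $N$ containing exactly $r$ ones (popcount $r$), so $\tilde{x}_0=r$ for ${\tt x}\in\Omega(N,r)$. For $1\le L\le M=(N-1)/2$, two vectors ${\tt x},{\tt y}\in\Omega(N,r)$ are called $L$-distinguishable if $\tilde{x}_m\neq\tilde{y}_m$ for some $m\in\{1,\dots,L\}$, and $L$-indistinguishable otherwise. The inverse problem $\mathrm{IP}(N,r,L)$ (recovering ${\tt x}\in\Omega(N,r)$ from $\tilde{x}_1,\dots,\tilde{x}_L$) is called uniquely solvable if all pairs of distinct vectors in $\Omega(N,r)$ are $L$-distinguishable. *)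

theory Defs
  imports "HOL-Analysis.Analysis"
begin

text \<open>A vector v = (v_1,...,v_N) is represented as a list of length N, with v_n = v ! (n-1).\<close>

definition dft_coeff :: "real list \<Rightarrow> int \<Rightarrow> complex" where
  "dft_coeff v m = (\<Sum>n = 1..length v.
      complex_of_real (v ! (n - 1)) *
      exp (\<i> * complex_of_real (2 * pi / real (length v)) * of_int m * of_nat n))"

definition Omega :: "nat \<Rightarrow> nat \<Rightarrow> real list set" where
  "Omega N r = {x. length x = N \<and> set x \<subseteq> {0, 1} \<and> length (filter (\<lambda>a. a = 1) x) = r}"

definition L_distinguishable :: "nat \<Rightarrow> real list \<Rightarrow> real list \<Rightarrow> bool" where
  "L_distinguishable L x y = (\<exists>m::int. 1 \<le> m \<and> m \<le> int L \<and> dft_coeff x m \<noteq> dft_coeff y m)"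

definition IP_uniquely_solvable :: "nat \<Rightarrow> nat \<Rightarrow> nat \<Rightarrow> bool" where
  "IP_uniquely_solvable N r L =
     (\<forall>x\<in>Omega N r. \<forall>y\<in>Omega N r. x \<noteq> y \<longrightarrow> L_distinguishable L x y)"

end

(* If x and y in Omega(N, r) had the same first DFT coefficient, then with
   z = exp(2 pi i / N) the differences d_k = x_k - y_k in {-1, 0, 1} would satisfy
   sum_{k<N} d_k z^k = 0. For prime N the polynomial 1 + X + ... + X^(N-1) is
   irreducible over Q (Eisenstein at N after substituting X + 1, and Gauss' lemma),
   so it is the minimal polynomial of z and divides sum_k d_k X^k; comparing degrees,
   all d_k are equal. Since x and y have the same number of ones, sum_k d_k = 0, so
   all d_k vanish. *)

theory Submission
  imports Defs "Berlekamp_Zassenhaus.Factor_Bound"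
begin

lemma eisenstein_factor_degree_0:
  fixes F f g :: "'a :: idom poly"
  assumes p: "prime_elem p" and F: "F = f * g"
    and dvd_coeff: "\<forall>k<degree F. p dvd poly.coeff F k"
    and not_dvd_lead: "\<not> p dvd lead_coeff F"
    and not_dvd_g0: "\<not> p dvd poly.coeff g 0"
  shows "degree g = 0"
proof (rule ccontr)
  assume "degree g \<noteq> 0"
  have "f \<noteq> 0" "g \<noteq> 0" using not_dvd_lead F by auto
  then have deg_F: "degree F = degree f + degree g" using F by (simp add: degree_mult_eq)
  have "\<not> p dvd lead_coeff f" using not_dvd_lead F by (auto simp: lead_coeff_mult)
  \<comment> \<open>If g is not constant, p divides the coefficient of X^k in F,
    which is f_k g_0 modulo p.\<close>
  define k where "k = (LEAST k. \<not> p dvd poly.coeff f k)"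
  have not_dvd_fk: "\<not> p dvd poly.coeff f k"
    unfolding k_def by (rule LeastI[of _ "degree f"]) fact
  have dvd_below_k: "p dvd poly.coeff f i" if "i < k" for i
    using not_less_Least[OF that[unfolded k_def]] by blast
  have "k \<le> degree f" unfolding k_def by (rule Least_le) fact
  then have "p dvd poly.coeff F k" using dvd_coeff deg_F \<open>degree g \<noteq> 0\<close> by simp
  moreover have "poly.coeff F k =
      (\<Sum>i<k. poly.coeff f i * poly.coeff g (k - i)) + poly.coeff f k * poly.coeff g 0"
    by (simp add: F coeff_mult lessThan_Suc_atMost[symmetric])
  moreover have "p dvd (\<Sum>i<k. poly.coeff f i * poly.coeff g (k - i))"
    using dvd_below_k by (auto intro!: dvd_sum dvd_mult2)
  ultimately have "p dvd poly.coeff f k * poly.coeff g 0" by (simp add: dvd_add_right_iff)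
  then show False using p not_dvd_fk not_dvd_g0 by (simp add: prime_elem_dvd_mult_iff)
qed

lemma eisenstein_irreducible\<^sub>d:
  fixes F :: "'a :: idom poly"
  assumes p: "prime_elem p" and "degree F > 0"
    and dvd_coeff: "\<forall>k<degree F. p dvd poly.coeff F k"
    and not_dvd_lead: "\<not> p dvd lead_coeff F"
    and not_sq_dvd_0: "\<not> p\<^sup>2 dvd poly.coeff F 0"
  shows "irreducible\<^sub>d F"
proof
  fix f g assume "degree f > 0" "degree g > 0" and F: "F = f * g"
  have "p dvd poly.coeff F 0" using dvd_coeff \<open>degree F > 0\<close> by blast
  then have "p dvd poly.coeff f 0 * poly.coeff g 0" by (simp add: F coeff_mult_0)
  moreover have "\<not> (p dvd poly.coeff f 0 \<and> p dvd poly.coeff g 0)"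
    using not_sq_dvd_0 by (auto simp: F coeff_mult_0 power2_eq_square mult_dvd_mono)
  ultimately have "\<not> p dvd poly.coeff g 0 \<or> \<not> p dvd poly.coeff f 0"
    using p by (auto simp: prime_elem_dvd_mult_iff)
  then show False
    using eisenstein_factor_degree_0[OF p F dvd_coeff not_dvd_lead]
      eisenstein_factor_degree_0[OF p _ dvd_coeff not_dvd_lead, of g f] F
      \<open>degree f > 0\<close> \<open>degree g > 0\<close> by (auto simp: mult.commute)
qed (fact)

lemma irreducible\<^sub>d_pcompose_linear:
  fixes F q :: "'a :: idom poly"
  assumes "irreducible\<^sub>d (F \<circ>\<^sub>p q)" and "degree q = 1"
  shows "irreducible\<^sub>d F"
proof
  show "degree F > 0" using assms by (auto simp: irreducible\<^sub>d_def)
  fix f g assume "degree f < degree F" "degree g < degree F" and F: "F = f * g"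
  have "F \<circ>\<^sub>p q = f \<circ>\<^sub>p q * g \<circ>\<^sub>p q" by (simp add: F pcompose_mult)
  then show False
    using irreducible\<^sub>dD(2)[OF assms(1), of "f \<circ>\<^sub>p q" "g \<circ>\<^sub>p q"] assms(2)
      \<open>degree f < degree F\<close> \<open>degree g < degree F\<close> by simp
qed

definition geom_poly :: "nat \<Rightarrow> 'a :: comm_semiring_1 poly" where
  "geom_poly n = (\<Sum>k<n. Polynomial.monom 1 k)"

lemma coeff_geom_poly: "poly.coeff (geom_poly n) k = (if k < n then 1 else 0)"
  unfolding geom_poly_def by (simp add: coeff_sum)

lemma poly_geom_poly: "poly (geom_poly n) x = (\<Sum>k<n. x ^ k)"
  unfolding geom_poly_def by (simp add: poly_sum poly_monom)

lemma degree_geom_poly: "n > 0 \<Longrightarrow> degree (geom_poly n) = n - 1"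
  by (rule antisym) (auto intro!: degree_le le_degree simp: coeff_geom_poly)

lemma map_poly_geom_poly:
  "f 0 = 0 \<Longrightarrow> f 1 = 1 \<Longrightarrow> map_poly f (geom_poly n) = geom_poly n"
  by (rule poly_eqI) (simp add: coeff_map_poly coeff_geom_poly)

lemma coeff_geom_poly_pcompose_plus_1:
  assumes "k < n"
  shows "poly.coeff (geom_poly n \<circ>\<^sub>p [:1, 1:]) k =
    (of_nat (n choose Suc k) :: 'a :: {idom, ring_char_0})"
proof -
  have "pCons 0 (geom_poly n \<circ>\<^sub>p [:1, 1:]) = [:1, 1:] ^ n - (1 :: 'a poly)"
  proof (rule poly_eq_poly_eq_iff[THEN iffD1, OF ext])
    fix x :: 'a
    have "1 - (1 + x) ^ n = (1 - (1 + x)) * (\<Sum>i<n. (1 + x) ^ i)" by (rule one_diff_power_eq)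
    then show "poly (pCons 0 (geom_poly n \<circ>\<^sub>p [:1, 1:])) x = poly ([:1, 1:] ^ n - 1) x"
      by (simp add: poly_pcompose poly_geom_poly algebra_simps)
  qed
  from arg_cong[OF this, of "\<lambda>p. poly.coeff p (Suc k)"] show ?thesis
    using coeff_linear_poly_power[of "Suc k" n "1::'a" 1] assms by simp
qed

lemma irreducible\<^sub>d_geom_poly_prime:
  assumes "prime p"
  shows "irreducible\<^sub>d (geom_poly p :: int poly)"
proof (rule irreducible\<^sub>d_pcompose_linear)
  let ?F = "geom_poly p \<circ>\<^sub>p [:1, 1:] :: int poly"
  have "p \<ge> 2" using assms by (rule prime_ge_2_nat)
  then have deg: "degree ?F = p - 1" by (simp add: degree_geom_poly)
  have coeff_F: "poly.coeff ?F k = int (p choose Suc k)" if "k < p" for k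
    using coeff_geom_poly_pcompose_plus_1[OF that] by simp
  show "irreducible\<^sub>d ?F"
  proof (rule eisenstein_irreducible\<^sub>d)
    show "prime_elem (int p)"
      using assms prime_nat_int_transfer[of p] unfolding prime_def by blast
    show "degree ?F > 0" using deg \<open>p \<ge> 2\<close> by simp
    show "\<forall>k<degree ?F. int p dvd poly.coeff ?F k"
      using deg coeff_F assms by (auto intro: dvd_choose_prime)
    show "\<not> int p dvd lead_coeff ?F"
      using deg coeff_F[of "p - 1"] \<open>p \<ge> 2\<close> by simp
    show "\<not> (int p)\<^sup>2 dvd poly.coeff ?F 0"
      using coeff_F[of 0] \<open>p \<ge> 2\<close> by (simp add: power2_eq_square)
  qed
qed simp

lemma irreducible_geom_poly_prime:
  assumes "prime p"
  shows "irreducible (geom_poly p :: rat poly)"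
  using irreducible\<^sub>d_int_rat[OF irreducible\<^sub>d_geom_poly_prime[OF assms]]
  by (simp add: map_poly_geom_poly)

lemma irreducible_dvd_if_common_root:
  fixes P Q :: "rat poly" and z :: "'a :: field_char_0"
  assumes "irreducible Q"
    and "poly (map_poly of_rat Q) z = 0" and "poly (map_poly of_rat P) z = 0"
  shows "Q dvd P"
proof (rule ccontr)
  interpret map_poly_idom_hom "of_rat :: rat \<Rightarrow> 'a" ..
  assume "\<not> Q dvd P"
  then have "coprime Q P"
    using assms(1) by (simp add: irreducible_imp_prime_elem prime_elem_imp_coprime)
  then have "fst (bezout_coefficients Q P) * Q + snd (bezout_coefficients Q P) * P = 1"
    using bezout_coefficients_fst_snd[of Q P] by simp
  from arg_cong[OF this, of "\<lambda>R. poly (map_poly of_rat R) z"] show False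
    using assms(2,3) by (simp add: hom_add hom_mult)
qed

lemma rational_relation_prime_root_of_unity:
  fixes z :: "'a :: field_char_0" and c :: "nat \<Rightarrow> 'a"
  assumes "prime N" and "z ^ N = 1" and "z \<noteq> 1"
    and rat: "\<forall>k<N. c k \<in> \<rat>" and rel: "(\<Sum>k<N. c k * z ^ k) = 0"
    and "j < N" and "k < N"
  shows "c j = c k"
proof -
  interpret map_poly_idom_hom "of_rat :: rat \<Rightarrow> 'a" ..
  have "\<forall>k<N. \<exists>r. c k = of_rat r" using rat by (auto elim: Rats_cases)
  then obtain q where q: "\<And>k. k < N \<Longrightarrow> c k = of_rat (q k)" by metis
  define P where "P = (\<Sum>k<N. Polynomial.monom (q k) k)"
  have coeff_P: "poly.coeff P i = (if i < N then q i else 0)" for i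
    by (simp add: P_def coeff_sum)
  have "poly (map_poly of_rat P) z = 0"
    using rel q by (simp add: P_def hom_sum poly_sum poly_monom)
  moreover have "poly (map_poly of_rat (geom_poly N)) z = 0"
    using assms(2,3) by (simp add: map_poly_geom_poly poly_geom_poly sum_gp_strict)
  ultimately have "geom_poly N dvd P"
    using irreducible_dvd_if_common_root irreducible_geom_poly_prime[OF assms(1)] by blast
  then obtain R where P_eq: "P = geom_poly N * R" by (elim dvdE)
  have "N > 0" using assms(1) prime_gt_0_nat by blast
  then have "poly.coeff (geom_poly N :: rat poly) 0 = 1" by (simp add: coeff_geom_poly)
  then have "geom_poly N \<noteq> (0 :: rat poly)" by auto
  have "degree R = 0"
  proof (rule ccontr)
    assume "degree R \<noteq> 0"
    then have "R \<noteq> 0" by auto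
    then have "degree P = N - 1 + degree R"
      using P_eq \<open>N > 0\<close> \<open>geom_poly N \<noteq> 0\<close>
      by (simp add: degree_mult_eq degree_geom_poly)
    moreover have "degree P \<le> N - 1" by (rule degree_le) (auto simp: coeff_P)
    ultimately show False using \<open>degree R \<noteq> 0\<close> by simp
  qed
  then obtain a where "R = [:a:]" by (elim degree_eq_zeroE)
  then have "q i = a" if "i < N" for i
    using coeff_P[of i] P_eq that by (simp add: coeff_geom_poly)
  then show ?thesis using q \<open>j < N\<close> \<open>k < N\<close> by simp
qed

lemma dft_coeff_1_eq:
  fixes v :: "real list"
  defines "z \<equiv> exp (2 * of_real pi * \<i> / of_nat (length v))"
  shows "dft_coeff v 1 = z * (\<Sum>k<length v. of_real (v ! k) * z ^ k)"
proof -
  have "exp (\<i> * complex_of_real (2 * pi / real (length v)) * of_int 1 * of_nat n) = z ^ n" for n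
    unfolding z_def exp_of_nat_mult[symmetric] by (simp add: field_simps)
  then have "dft_coeff v 1 = (\<Sum>n = 1..length v. of_real (v ! (n - 1)) * z ^ n)"
    by (simp add: dft_coeff_def)
  also have "\<dots> = (\<Sum>k<length v. of_real (v ! k) * z ^ Suc k)"
    by (simp add: sum.atLeast1_atMost_eq)
  finally show ?thesis by (simp add: sum_distrib_left algebra_simps)
qed

lemma dft_coeff_1_inj_prime_length:
  fixes x y :: "real list"
  assumes prime: "prime (length x)" and len: "length y = length x"
    and "set x \<subseteq> \<rat>" and "set y \<subseteq> \<rat>" and sum_eq: "sum_list x = sum_list y"
    and dft_eq: "dft_coeff x 1 = dft_coeff y 1"
  shows "x = y"
proof -
  define N where "N = length x"
  define z :: complex where "z = exp (2 * of_real pi * \<i> / of_nat N)"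
  define c :: "nat \<Rightarrow> complex" where "c k = of_real (x ! k - y ! k)" for k
  have "N > 1" using prime prime_gt_1_nat N_def by blast
  have "z ^ N = 1" using \<open>N > 1\<close> by (simp add: z_def exp_of_nat_mult[symmetric] exp_two_pi_i)
  have "z \<noteq> 1" using complex_root_unity_eq_1[of N 1] \<open>N > 1\<close> by (simp add: z_def)
  have rat: "\<forall>k<N. c k \<in> \<rat>"
  proof (intro allI impI)
    fix k assume "k < N"
    then have "x ! k \<in> \<rat>" "y ! k \<in> \<rat>" using assms(3,4) len nth_mem by (auto simp: N_def)
    then show "c k \<in> \<rat>" unfolding c_def Rats_complex_of_real_iff by (rule Rats_diff)
  qed
  have "z * (\<Sum>k<N. c k * z ^ k) = 0"
    using dft_eq dft_coeff_1_eq[of x] dft_coeff_1_eq[of y] len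
    by (simp add: c_def N_def z_def sum_subtractf algebra_simps)
  then have rel: "(\<Sum>k<N. c k * z ^ k) = 0" by (simp add: z_def)
  have c_const: "c k = c 0" if "k < N" for k
    by (rule rational_relation_prime_root_of_unity[OF prime[folded N_def]
          \<open>z ^ N = 1\<close> \<open>z \<noteq> 1\<close> rat rel that])
      (use \<open>N > 1\<close> in simp)
  have "(\<Sum>k<N. c k) = 0"
    using sum_eq len
    by (simp add: c_def N_def sum_list_sum_nth atLeast0LessThan sum_subtractf flip: of_real_sum)
  moreover have "(\<Sum>k<N. c k) = (\<Sum>k<N. c 0)" by (rule sum.cong) (auto intro: c_const)
  ultimately have "c 0 = 0" using \<open>N > 1\<close> by simp
  then have "x ! k = y ! k" if "k < N" for k
    using c_const[OF that] by (simp add: c_def)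
  then show "x = y" using len by (auto simp: N_def intro: nth_equalityI)
qed

lemma sum_list_binary:
  "set x \<subseteq> {0, 1} \<Longrightarrow> sum_list x = real (length (filter (\<lambda>a. a = 1) x))"
  by (induction x) auto

theorem theorem1:
  fixes N r :: nat
  assumes "prime N" and "odd N"
    and "0 < r" and "r \<le> (N - 1) div 2"
  shows "IP_uniquely_solvable N r 1"
  unfolding IP_uniquely_solvable_def L_distinguishable_def
proof (intro ballI impI)
  fix x y assume "x \<in> Omega N r" "y \<in> Omega N r" "x \<noteq> y"
  then have "length x = N" "length y = N" "set x \<subseteq> \<rat>" "set y \<subseteq> \<rat>"
    and "sum_list x = sum_list y"
    by (auto simp: Omega_def sum_list_binary)
  then have "dft_coeff x 1 \<noteq> dft_coeff y 1"
    using dft_coeff_1_inj_prime_length \<open>prime N\<close> \<open>x \<noteq> y\<close> by metis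
  then show "\<exists>m. 1 \<le> m \<and> m \<le> int 1 \<and> dft_coeff x m \<noteq> dft_coeff y m" by auto
qed

end
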